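(* Let $S,E\ge0$ be integers and let $\mathbf c=(c_1,\dots,c_m)$, $\mathbf d=(d_1,\dots,d_m)$ be partitions with $\mathbf c\ne\mathbf d$. Let $\ell=\max\{i: c_i\ne d_i\}$, $f=\max\{i\in\{1,\dots,\ell\}: c_i<d_{i-1}\}$ (with $d_0=+\infty$) and $f'=\max\{i\in\{1,\dots,\ell\}: d_i<c_{i-1}\}$ (with $c_0=+\infty$). 1. There exists a partition $\mathbf g=(g_1,\dots,g_{m+1})$ with $\sum_{i=1}^{m+1}g_i=S$, $\mathbf g\prec'\mathbf c$ and $\mathbf g\prec'\mathbf d$ if and only if $S\le\sum_{i=1}^m\min\{c_i,d_i\}+\max\{c_f,d_{f'}\}$. 2. If $f>1$ and $f'>1$, there exists a partition $\mathbf e=(e_1,\dots,e_{m-1})$ with $\sum_{i=1}^{m-1}e_i=E$, $\mathbf c\prec'\mathbf e$ and $\mathbf d\prec'\mathbf e$ if and only if $E\ge\sum_{i=1}^m\max\{c_i,d_i\}-\max\{c_f,d_{f'}\}$. 3. If $f=1$ or $f'=1$, there exists a partition $\mathbf e=(e_1,\dots,e_{m-1})$ with $\sum_{i=1}^{m-1}e_i=E$, $\mathbf c\prec'\mathbf e$ and $\mathbf d\prec'\mathbf e$ if and only if $$E=\sum_{i=1}^m\max\{c_i,d_i\}-\max\{c_f,d_{f'}\}\quad\text{or}\quad E\ge\sum_{i=1}^m\max\{c_i,d_i\}-\max\{c_{f+1},d_{f'+1}\};$$ equivalently, if and only if $E=\sum_{i=2}^m\max\{c_i,d_i\}$ or 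$E\ge\max\{c_1,d_1\}+\sum_{i=3}^m\max\{c_i,d_i\}$.
   Context: A partition is a nonincreasing finite sequence of nonnegative integers; for a sequence $(a_1,\dots,a_m)$ one sets $a_i=-\infty$ for $i>m$. 1-step generalized majorization: for nonincreasing integer sequences $\mathbf g=(g_1,\dots,g_{k+1})$ and $\mathbf a=(a_1,\dots,a_k)$, set $a_{k+1}=-\infty$ and $h=\min\{i: a_i<g_i\}$; then $\mathbf g\prec'\mathbf a$ means $a_i=g_{i+1}$ for all $h\le i\le k$. Empty sums are $0$. *)

theory Defs
  imports Main "HOL-Library.Extended_Real"
begin

text \<open>Sequences (a_1,...,a_k) are int lists; a_i is stored at position i-1.\<close>

definition is_partition :: "int list \<Rightarrow> bool" where
  "is_partition xs \<longleftrightarrow> sorted_wrt (\<ge>) xs \<and> (\<forall>x\<in>set xs. 0 \<le> x)"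

definition entx :: "int list \<Rightarrow> nat \<Rightarrow> ereal" where
  "entx xs i = (if i = 0 then \<infinity> else if i \<le> length xs then ereal (xs ! (i - 1)) else -\<infinity>)"

text \<open>1-step generalized majorization g \<prec>' a, for nonincreasing integer sequences
  g = (g_1,...,g_{k+1}) and a = (a_1,...,a_k); h = min {i. a_i < g_i} with a_{k+1} = -infinity.\<close>
definition gmaj :: "int list \<Rightarrow> int list \<Rightarrow> bool" where
  "gmaj g a \<longleftrightarrow> length g = Suc (length a) \<and> sorted_wrt (\<ge>) g \<and> sorted_wrt (\<ge>) a \<and>
     (let h = (LEAST i. 1 \<le> i \<and> entx a i < entx g i)
      in \<forall>i. h \<le> i \<and> i \<le> length a \<longrightarrow> a ! (i - 1) = g ! i)"

definition lidx :: "int list \<Rightarrow> int list \<Rightarrow> nat" where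
  "lidx c d = Max {i \<in> {1..length c}. c ! (i - 1) \<noteq> d ! (i - 1)}"

text \<open>f = max {i \<in> {1..\<ell>}. c_i < d_{i-1}} with d_0 = +infinity;
  f' is obtained by swapping c and d.\<close>
definition fidx :: "int list \<Rightarrow> int list \<Rightarrow> nat" where
  "fidx c d = Max {i \<in> {1..lidx c d}. entx c i < entx d (i - 1)}"

end

theory Submission
  imports Defs
begin

text \<open>
  A relation \<open>g \<prec>' a\<close> is determined by its switch index h: \<open>g\<^sub>j \<le> a\<^sub>j\<close> below h and
  \<open>a\<^sub>j = g\<^sub>j\<^sub>+\<^sub>1\<close> from h on (lemma gmaj_iff).  For a common predecessor g of c and d,
  deleting the entry of g at the smaller of the two switch indices leaves a sequence bounded
  entrywise by \<open>min c\<^sub>j d\<^sub>j\<close>, except for the excess of c over d at that index; the deleted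
  entry plus this excess is at most \<open>max c\<^sub>f d\<^sub>f\<^sub>'\<close>, because that switch index cannot precede
  f' (or f, if d switches first).  Conversely, inserting any value \<open>y \<le> max c\<^sub>f d\<^sub>f\<^sub>'\<close> into the sequence
  \<open>min c\<^sub>j d\<^sub>j\<close> at the first position where it fits yields a common predecessor, and smaller
  sums are reached by lowering \<open>min c\<^sub>j d\<^sub>j\<close> entrywise.

  Dually, a common successor e is bounded below by \<open>max c\<^sub>j d\<^sub>j\<close> with one entry deleted at
  the switch index, and is equal to it beyond that index.  Deleting the first entry forces
  \<open>\<Sum>e = \<Sum>\<^sub>i\<^sub>\<ge>\<^sub>2 max c\<^sub>i d\<^sub>i\<close> exactly, while any later deletion costs at least
  \<open>max c\<^sub>2 d\<^sub>2\<close>.  When f = 1 or f' = 1 the general bound \<open>\<Sum> max c\<^sub>i d\<^sub>i - max c\<^sub>f d\<^sub>f\<^sub>'\<close> is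
  reached only by deleting the first entry, which leaves no freedom and gives the isolated value
  of the third part.  Witnesses are \<open>max c\<^sub>j d\<^sub>j\<close> with one entry deleted and the first
  entry raised.  Everything is symmetric in c and d, which halves each case analysis.
\<close>

lemma sorted_wrt_ge_nth:
  fixes xs :: "'a::linorder list"
  assumes "sorted_wrt (\<ge>) xs" "i \<le> j" "j < length xs"
  shows "xs ! j \<le> xs ! i"
  using assms sorted_wrt_nth_less[OF assms(1)] by (cases "i = j") auto

lemma sorted_wrt_geI:
  fixes xs :: "'a::order list"
  assumes "\<And>j. Suc j < length xs \<Longrightarrow> xs ! Suc j \<le> xs ! j"
  shows "sorted_wrt (\<ge>) xs"
  using assms by (subst sorted_wrt_iff_nth_Suc_transp) (auto simp: transp_def)

lemma sum_lessThan_Suc_remove: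
  fixes F :: "nat \<Rightarrow> 'a::ab_group_add"
  assumes "h \<le> n"
  shows "(\<Sum>j<Suc n. F j) = F h + (\<Sum>j<n. if j < h then F j else F (Suc j))"
  using assms
proof (induction h)
  case 0
  show ?case by (subst sum.lessThan_Suc_shift) simp
next
  case (Suc h)
  have "(\<Sum>j<n. if j < Suc h then F j else F (Suc j)) =
        (\<Sum>j<n. (if j < h then F j else F (Suc j)) + (if j = h then F h - F (Suc h) else 0))"
    by (rule sum.cong) auto
  also have "\<dots> = (\<Sum>j<n. if j < h then F j else F (Suc j)) + (F h - F (Suc h))"
    using Suc.prems by (simp add: sum.distrib)
  finally show ?case using Suc by (simp add: algebra_simps)
qed

lemma sum_list_conv_sum_lessThan: "sum_list xs = (\<Sum>j<length xs. xs ! j)"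
  by (simp add: sum_list_sum_nth atLeast0LessThan)

lemma sum_list_map_upt_zero: "sum_list (map F [0..<n]) = (\<Sum>j<n. F j)"
  by (simp add: sum_set_upt_conv_sum_list_nat[symmetric] atLeast0LessThan)

lemma sum_one_based_from:
  fixes F :: "nat \<Rightarrow> 'a::ab_group_add"
  assumes "k \<le> n"
  shows "(\<Sum>i=Suc k..n. F (i - 1)) = (\<Sum>j<n. F j) - (\<Sum>j<k. F j)"
proof -
  have "(\<Sum>i=Suc k..n. F (i - 1)) = (\<Sum>j=k..<n. F j)"
    by (induction n) (auto simp: atLeastLessThanSuc atLeastAtMostSuc_conv ac_simps)
  moreover have "(\<Sum>j<k. F j) + (\<Sum>j=k..<n. F j) = (\<Sum>j<n. F j)"
    using sum.atLeastLessThan_concat[of 0 k n F] assms by (simp add: atLeast0LessThan)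
  ultimately show ?thesis by (simp add: algebra_simps)
qed

lemma sum_one_based:
  fixes F :: "nat \<Rightarrow> 'a::ab_group_add"
  shows "(\<Sum>i=1..n. F (i - 1)) = (\<Sum>j<n. F j)"
  using sum_one_based_from[of 0 n F] by simp

lemma ereal_of_int_le_add_iff:
  "ereal (of_int s) \<le> ereal (of_int a) + ereal (of_int b) \<longleftrightarrow> s \<le> a + b"
  by (metis plus_ereal.simps(1) ereal_less_eq(3) of_int_add of_int_le_iff)

lemma ereal_of_int_diff: "ereal (of_int a) - ereal (of_int b) = ereal (of_int (a - b))"
  by simp

lemma ereal_of_int_diff_le_iff:
  "ereal (of_int a) - ereal (of_int b) \<le> ereal (of_int e) \<longleftrightarrow> a - b \<le> e"
  unfolding ereal_of_int_diff by (simp del: of_int_diff)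

lemma ereal_of_int_eq_diff_iff:
  "ereal (of_int e) = ereal (of_int a) - ereal (of_int b) \<longleftrightarrow> e = a - b"
  unfolding ereal_of_int_diff by (simp del: of_int_diff)

lemma partition_below:
  fixes p :: "int list"
  assumes "sorted_wrt (\<ge>) p" "\<forall>x\<in>set p. 0 \<le> x" "0 \<le> S" "S \<le> sum_list p"
  obtains q where "length q = length p" "sorted_wrt (\<ge>) q" "\<forall>x\<in>set q. 0 \<le> x"
    "\<forall>j<length p. q!j \<le> p!j" "sum_list q = S"
  using assms
proof (induction p arbitrary: S thesis rule: rev_induct)
  case Nil
  then show ?case by simp
next
  case (snoc x ps)
  have sorted_ps: "sorted_wrt (\<ge>) ps" and nonneg_ps: "\<forall>x\<in>set ps. 0 \<le> x"
    and "0 \<le> x" and x_least: "\<forall>y\<in>set ps. x \<le> y"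
    using snoc.prems by (auto simp: sorted_wrt_append)
  show ?case
  proof (cases "S \<le> sum_list ps")
    case True
    obtain q where q: "length q = length ps" "sorted_wrt (\<ge>) q" "\<forall>x\<in>set q. 0 \<le> x"
      "\<forall>j<length ps. q!j \<le> ps!j" "sum_list q = S"
      using snoc.IH[OF _ sorted_ps nonneg_ps \<open>0 \<le> S\<close> True] by blast
    show ?thesis
      by (rule snoc.prems(1)[of "q @ [0]"])
        (use q \<open>0 \<le> x\<close> in \<open>auto simp: sorted_wrt_append nth_append less_Suc_eq\<close>)
  next
    case False
    show ?thesis
      by (rule snoc.prems(1)[of "ps @ [S - sum_list ps]"])
        (use False snoc.prems sorted_ps nonneg_ps x_least in
          \<open>auto simp: sorted_wrt_append nth_append less_Suc_eq\<close>)
  qed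
qed

lemma obtain_insertion_index:
  fixes d :: "'a::linorder list"
  assumes "f \<le> m"
  obtains p where "f \<le> p" "p \<le> m" "p = m \<or> d!p \<le> y" "p = f \<or> y < d!(p-1)"
proof -
  define P where "P p \<longleftrightarrow> f \<le> p \<and> (p = m \<or> d!p \<le> y)" for p
  define p where "p = (LEAST p. P p)"
  have "P m" using assms by (simp add: P_def)
  then have "P p" "p \<le> m" unfolding p_def by (auto intro: LeastI Least_le)
  moreover have "p = f \<or> y < d!(p-1)"
  proof (cases "p = f")
    case False
    then have "p - 1 < p" using \<open>P p\<close> by (auto simp: P_def)
    then have "\<not> P (p-1)" unfolding p_def by (rule not_less_Least)
    then show ?thesis using \<open>P p\<close> \<open>p \<le> m\<close> False by (auto simp: P_def)
  qed simp
  ultimately show ?thesis using that by (auto simp: P_def)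
qed

lemma gmaj_threshold:
  assumes "length g = Suc (length a)"
  defines "h \<equiv> LEAST i. 1 \<le> i \<and> entx a i < entx g i"
  shows "1 \<le> h" and "h \<le> Suc (length a)"
    and "\<And>j. Suc j < h \<Longrightarrow> g ! j \<le> a ! j"
    and "h \<le> length a \<Longrightarrow> a ! (h - 1) < g ! (h - 1)"
proof -
  define P where "P i \<longleftrightarrow> 1 \<le> i \<and> entx a i < entx g i" for i
  have h: "h = (LEAST i. P i)" by (simp add: h_def P_def)
  have P_end: "P (Suc (length a))" using assms(1) by (simp add: P_def entx_def)
  have "P h" unfolding h by (rule LeastI[of P, OF P_end])
  then show "1 \<le> h" by (simp add: P_def)
  show h_le: "h \<le> Suc (length a)" unfolding h by (rule Least_le[of P, OF P_end])
  show "g ! j \<le> a ! j" if "Suc j < h" for j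
  proof -
    have "\<not> P (Suc j)" using that unfolding h by (rule not_less_Least)
    then show ?thesis using that h_le assms(1) by (simp add: P_def entx_def)
  qed
  show "a ! (h - 1) < g ! (h - 1)" if "h \<le> length a"
    using \<open>P h\<close> that assms(1) by (auto simp: P_def entx_def split: if_splits)
qed

lemma gmaj_iff:
  "gmaj g a \<longleftrightarrow> length g = Suc (length a) \<and> sorted_wrt (\<ge>) g \<and> sorted_wrt (\<ge>) a \<and>
     (\<exists>h\<le>length a. (\<forall>j<h. g!j \<le> a!j) \<and> (\<forall>j. h \<le> j \<longrightarrow> j < length a \<longrightarrow> a!j = g!Suc j))"
proof (cases "length g = Suc (length a)")
  case False
  then show ?thesis by (simp add: gmaj_def)
next
  case True
  define h0 where "h0 = (LEAST i. 1 \<le> i \<and> entx a i < entx g i)"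
  note h0 = gmaj_threshold[OF True, folded h0_def]
  have "(\<forall>i. h0 \<le> i \<and> i \<le> length a \<longrightarrow> a ! (i - 1) = g ! i) \<longleftrightarrow>
     (\<exists>h\<le>length a. (\<forall>j<h. g!j \<le> a!j) \<and> (\<forall>j. h \<le> j \<longrightarrow> j < length a \<longrightarrow> a!j = g!Suc j))"
    (is "?tail \<longleftrightarrow> ?split")
  proof
    assume ?tail
    show ?split
    proof (intro exI[of _ "h0 - 1"] conjI allI impI)
      show "h0 - 1 \<le> length a" using h0(2) by simp
    next
      fix j assume "j < h0 - 1"
      then show "g ! j \<le> a ! j" using h0(3) by simp
    next
      fix j assume "h0 - 1 \<le> j" "j < length a"
      then show "a ! j = g ! Suc j" using \<open>?tail\<close> by (auto dest: spec[of _ "Suc j"])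
    qed
  next
    assume ?split
    then obtain h where h: "h \<le> length a" "\<forall>j<h. g!j \<le> a!j"
      "\<forall>j. h \<le> j \<longrightarrow> j < length a \<longrightarrow> a!j = g!Suc j" by blast
    have "h < h0"
    proof (rule ccontr)
      assume "\<not> h < h0"
      then have "h0 - 1 < h" "h0 \<le> length a" using h0(1) h(1) by auto
      then show False using h(2) h0(4) by force
    qed
    show ?tail
    proof (intro allI impI)
      fix i assume "h0 \<le> i \<and> i \<le> length a"
      then have "h \<le> i - 1" "i - 1 < length a" "Suc (i - 1) = i" using \<open>h < h0\<close> h0(1) by auto
      then show "a ! (i - 1) = g ! i" using h(3) by metis
    qed
  qed
  then show ?thesis using True by (simp add: gmaj_def Let_def h0_def)
qed

text \<open>Positions are 0-based: l, f, f' stand for the paper's \<open>\<ell> - 1\<close>, \<open>f - 1\<close>, \<open>f' - 1\<close>,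
  and the convention \<open>d\<^sub>0 = +\<infinity>\<close> becomes the alternative \<open>f = 0\<close>.\<close>

locale partition_pair =
  fixes c d :: "int list" and m l f f' :: nat
  assumes sorted_c: "sorted_wrt (\<ge>) c" and sorted_d: "sorted_wrt (\<ge>) d"
    and nonneg_c: "\<forall>x\<in>set c. 0 \<le> x" and nonneg_d: "\<forall>x\<in>set d. 0 \<le> x"
    and length_c: "length c = m" and length_d: "length d = m"
    and l_less_m: "l < m" and differ_at_l: "c!l \<noteq> d!l"
    and agree_after_l: "\<And>j. l < j \<Longrightarrow> j < m \<Longrightarrow> c!j = d!j"
    and f_le_l: "f \<le> l" and f_drop: "f = 0 \<or> c!f < d!(f-1)"
    and f_last: "\<And>i. f < i \<Longrightarrow> i \<le> l \<Longrightarrow> d!(i-1) \<le> c!i"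
    and f'_le_l: "f' \<le> l" and f'_drop: "f' = 0 \<or> d!f' < c!(f'-1)"
    and f'_last: "\<And>i. f' < i \<Longrightarrow> i \<le> l \<Longrightarrow> c!(i-1) \<le> d!i"

lemma partition_pair_swap: "partition_pair c d m l f f' \<Longrightarrow> partition_pair d c m l f' f"
  unfolding partition_pair_def by metis

context partition_pair
begin

lemma swapped: "partition_pair d c m l f' f"
  by (rule partition_pair_swap[OF partition_pair_axioms])

lemma c_antimono: "i \<le> j \<Longrightarrow> j < m \<Longrightarrow> c!j \<le> c!i"
  using sorted_wrt_ge_nth[OF sorted_c] length_c by simp

lemma d_antimono: "i \<le> j \<Longrightarrow> j < m \<Longrightarrow> d!j \<le> d!i"
  using sorted_wrt_ge_nth[OF sorted_d] length_d by simp

lemma c_nonneg: "j < m \<Longrightarrow> 0 \<le> c!j"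
  using nonneg_c length_c nth_mem by metis

lemma d_nonneg: "j < m \<Longrightarrow> 0 \<le> d!j"
  using nonneg_d length_d nth_mem by metis

lemma d_le_c_from_f:
  assumes "d!f' \<le> c!f" "f \<le> j" "j < m"
  shows "d!j \<le> c!j"
proof -
  have "d!f \<le> c!f"
  proof (cases "f < l")
    case True
    then have "d!f \<le> c!Suc f" using f_last[of "Suc f"] by simp
    then show ?thesis using c_antimono[of f "Suc f"] True l_less_m by simp
  next
    case False
    then have "f = l" using f_le_l by simp
    then show ?thesis using d_antimono[OF f'_le_l] l_less_m assms(1) by simp
  qed
  moreover have "d!j \<le> c!j" if "f < j"
  proof (cases "j \<le> l")
    case True
    have "d!j \<le> d!(j-1)" using d_antimono[of "j-1" j] assms by simp
    also have "\<dots> \<le> c!j" using f_last[of j] True that by simp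
    finally show ?thesis .
  next
    case False
    then show ?thesis using agree_after_l[of j] assms by simp
  qed
  ultimately show ?thesis using assms(2) by (cases "f = j") auto
qed

subsection \<open>Upper bound on the sum of a common predecessor\<close>

text \<open>hc and hz are the switch indices of \<open>g \<prec>' c\<close> and \<open>g \<prec>' d\<close>; the case \<open>hz < hc\<close> is
  obtained by swapping c and d.\<close>

context
  fixes g :: "int list" and hc hz :: nat
  assumes length_g: "length g = Suc m" and sorted_g: "sorted_wrt (\<ge>) g"
    and hc_le_hz: "hc \<le> hz" and hz_le_m: "hz \<le> m"
    and g_le_c: "\<forall>j<hc. g!j \<le> c!j" and c_eq_g: "\<forall>j. hc \<le> j \<longrightarrow> j < m \<longrightarrow> c!j = g!Suc j"
    and g_le_d: "\<forall>j<hz. g!j \<le> d!j" and d_eq_g: "\<forall>j. hz \<le> j \<longrightarrow> j < m \<longrightarrow> d!j = g!Suc j"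
begin

lemma pred_l_less_hz: "l < hz"
proof (rule ccontr)
  assume "\<not> l < hz"
  then have "c!l = d!l" using c_eq_g d_eq_g hc_le_hz l_less_m by simp
  then show False using differ_at_l by simp
qed

lemma pred_sum_le_switch:
  "sum_list g \<le> g!hc + (\<Sum>j<m. if j < hc then min (c!j) (d!j) else c!j)"
proof -
  have "sum_list g = g!hc + (\<Sum>j<m. if j < hc then g!j else g!Suc j)"
    using sum_lessThan_Suc_remove[of hc m "(!) g"] hc_le_hz hz_le_m length_g
    by (simp add: sum_list_conv_sum_lessThan)
  also have "\<dots> \<le> g!hc + (\<Sum>j<m. if j < hc then min (c!j) (d!j) else c!j)"
    by (intro add_left_mono sum_mono) (use g_le_c g_le_d c_eq_g hc_le_hz in auto)
  finally show ?thesis .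
qed

lemma pred_sum_le_same_switch:
  assumes "hc = hz"
  shows "sum_list g \<le> (\<Sum>j<m. min (c!j) (d!j)) + max (c!f) (d!f')"
proof -
  have "l < hc" using pred_l_less_hz assms by simp
  have "(\<Sum>j<m. if j < hc then min (c!j) (d!j) else c!j) = (\<Sum>j<m. min (c!j) (d!j))"
    by (rule sum.cong) (use c_eq_g d_eq_g assms in auto)
  moreover have "g!hc \<le> c!f"
  proof -
    have "g!hc \<le> g!(hc-1)" using sorted_wrt_ge_nth[OF sorted_g, of "hc-1" hc] length_g hz_le_m assms
      by simp
    also have "\<dots> \<le> c!(hc-1)" using g_le_c \<open>l < hc\<close> by simp
    also have "\<dots> \<le> c!f" using c_antimono[of f "hc-1"] f_le_l \<open>l < hc\<close> hz_le_m assms by simp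
    finally show ?thesis .
  qed
  ultimately show ?thesis using pred_sum_le_switch by simp
qed

lemma pred_max_at_switch_le:
  assumes "hc < hz"
  shows "max (c!hc) (d!hc) \<le> max (c!f) (d!f')"
proof -
  have "f' \<le> hc"
  proof (rule ccontr)
    assume "\<not> f' \<le> hc"
    then have "hc < f'" "f' < hz" using f'_le_l pred_l_less_hz by auto
    then have "d!f' < c!(f'-1)" "c!(f'-1) = g!f'" "g!f' \<le> d!f'"
      using f'_drop c_eq_g g_le_d hz_le_m by auto
    then show False by simp
  qed
  then have "d!hc \<le> d!f'" using d_antimono assms hz_le_m by simp
  moreover have "c!hc \<le> c!f" if "d!hc < c!hc"
  proof -
    have "l \<le> hc"
    proof (rule ccontr)
      assume "\<not> l \<le> hc"
      then have "c!hc = g!Suc hc" "g!Suc hc \<le> d!Suc hc" "d!Suc hc \<le> d!hc"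
        using c_eq_g g_le_d pred_l_less_hz hz_le_m l_less_m d_antimono[of hc "Suc hc"] assms by auto
      then show False using that by simp
    qed
    then show ?thesis using c_antimono[of f hc] f_le_l assms hz_le_m by simp
  qed
  ultimately show ?thesis by (cases "d!hc < c!hc") auto
qed

lemma pred_sum_le_later_switch:
  assumes "hc < hz"
  shows "sum_list g \<le> (\<Sum>j<m. min (c!j) (d!j)) + max (c!f) (d!f')"
proof -
  have c_le_d: "c!j \<le> d!j" if "hc < j" "j < m" for j
  proof (cases "hz \<le> j")
    case True
    then show ?thesis using c_eq_g d_eq_g that hc_le_hz by simp
  next
    case False
    have "c!j \<le> c!(j-1)" using c_antimono[of "j-1" j] that by simp
    also have "\<dots> = g!j" using c_eq_g that by (auto dest: spec[of _ "j-1"])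
    also have "\<dots> \<le> d!j" using g_le_d False by simp
    finally show ?thesis .
  qed
  have "(\<Sum>j<m. if j < hc then min (c!j) (d!j) else c!j)
      \<le> (\<Sum>j<m. min (c!j) (d!j) + (if j = hc then c!hc - min (c!hc) (d!hc) else 0))"
    by (rule sum_mono) (use c_le_d in auto)
  also have "\<dots> = (\<Sum>j<m. min (c!j) (d!j)) + (c!hc - min (c!hc) (d!hc))"
    using assms hz_le_m by (simp add: sum.distrib)
  finally have "sum_list g \<le> (\<Sum>j<m. min (c!j) (d!j)) + (g!hc + c!hc - min (c!hc) (d!hc))"
    using pred_sum_le_switch by simp
  moreover have "g!hc \<le> d!hc" using g_le_d assms by simp
  ultimately show ?thesis using pred_max_at_switch_le[OF assms] by linarith
qed

lemma pred_sum_le: "sum_list g \<le> (\<Sum>j<m. min (c!j) (d!j)) + max (c!f) (d!f')"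
  using pred_sum_le_same_switch pred_sum_le_later_switch hc_le_hz by fastforce

end

lemma common_pred_sum_le:
  assumes "length g = Suc m" "gmaj g c" "gmaj g d"
  shows "sum_list g \<le> (\<Sum>j<m. min (c!j) (d!j)) + max (c!f) (d!f')"
proof -
  obtain hc where hc: "hc \<le> m" "\<forall>j<hc. g!j \<le> c!j" "\<forall>j. hc \<le> j \<longrightarrow> j < m \<longrightarrow> c!j = g!Suc j"
    and sorted_g: "sorted_wrt (\<ge>) g"
    using assms(2) length_c unfolding gmaj_iff by auto
  obtain hz where hz: "hz \<le> m" "\<forall>j<hz. g!j \<le> d!j" "\<forall>j. hz \<le> j \<longrightarrow> j < m \<longrightarrow> d!j = g!Suc j"
    using assms(3) length_d unfolding gmaj_iff by auto
  have "sum_list g \<le> (\<Sum>j<m. min (c!j) (d!j)) + max (c!f) (d!f')" if "hc \<le> hz"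
    by (rule pred_sum_le[OF assms(1) sorted_g that hz(1) hc(2,3) hz(2,3)])
  moreover have "sum_list g \<le> (\<Sum>j<m. min (d!j) (c!j)) + max (d!f') (c!f)" if "hz \<le> hc"
    by (rule partition_pair.pred_sum_le[OF swapped assms(1) sorted_g that hc(1) hz(2,3) hc(2,3)])
  ultimately show ?thesis by (cases "hc \<le> hz") (simp_all add: min.commute max.commute)
qed

subsection \<open>Existence of a common predecessor\<close>

lemma common_pred_exists_le_sum_min:
  assumes "0 \<le> S" "S \<le> (\<Sum>j<m. min (c!j) (d!j))"
  shows "\<exists>g. is_partition g \<and> length g = m + 1 \<and> sum_list g = S \<and> gmaj g c \<and> gmaj g d"
proof -
  define mn where "mn j = min (c!j) (d!j)" for j
  have mn_antimono: "mn j \<le> mn i" if "i \<le> j" "j < m" for i j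
    using c_antimono[OF that] d_antimono[OF that] by (auto simp: mn_def)
  have mn_nonneg: "0 \<le> mn j" if "j < m" for j
    using c_nonneg[OF that] d_nonneg[OF that] by (simp add: mn_def)
  define p where "p = map (\<lambda>j. mn (min j (m - 1))) [0..<Suc m]"
  have length_p: "length p = Suc m" by (simp add: p_def)
  have p_nth: "p!j = mn (min j (m - 1))" if "j < Suc m" for j
    using that by (simp add: p_def del: upt_Suc)
  have sorted_p: "sorted_wrt (\<ge>) p"
    by (rule sorted_wrt_geI) (simp add: length_p p_nth mn_antimono)
  have nonneg_p: "\<forall>x\<in>set p. 0 \<le> x" using l_less_m by (auto simp: p_def intro!: mn_nonneg)
  have "S \<le> sum_list p"
  proof -
    have "sum_list p = (\<Sum>j<m. mn j) + mn (m - 1)"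
      by (simp add: p_def sum_list_map_upt_zero)
    moreover have "0 \<le> mn (m - 1)" using mn_nonneg l_less_m by simp
    ultimately show ?thesis using assms(2) unfolding mn_def by linarith
  qed
  then obtain q where q: "length q = Suc m" "sorted_wrt (\<ge>) q" "\<forall>x\<in>set q. 0 \<le> x"
    "\<forall>j<Suc m. q!j \<le> p!j" "sum_list q = S"
    using partition_below[OF sorted_p nonneg_p assms(1)] unfolding length_p by blast
  have q_le: "q!j \<le> c!j" "q!j \<le> d!j" if "j < m" for j
    using q(4)[rule_format, of j] p_nth[of j] that by (auto simp: mn_def)
  have "gmaj q c"
    unfolding gmaj_iff using q(1,2) length_c sorted_c q_le(1) by (intro conjI exI[of _ m]) auto
  moreover have "gmaj q d"
    unfolding gmaj_iff using q(1,2) length_d sorted_d q_le(2) by (intro conjI exI[of _ m]) auto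
  ultimately show ?thesis using q by (auto simp: is_partition_def)
qed

definition pred_witness :: "nat \<Rightarrow> int \<Rightarrow> int list" where
  "pred_witness p y =
     map (\<lambda>j. if j < p then min (c!j) (d!j) else if j = p then y else d!(j-1)) [0..<Suc m]"

lemma length_pred_witness [simp]: "length (pred_witness p y) = Suc m"
  by (simp add: pred_witness_def)

lemma pred_witness_nth: "j < Suc m \<Longrightarrow>
    pred_witness p y ! j = (if j < p then min (c!j) (d!j) else if j = p then y else d!(j-1))"
  by (simp add: pred_witness_def del: upt_Suc)

context
  fixes p :: nat and y :: int
  assumes d_f'_le_c_f: "d!f' \<le> c!f" and y_nonneg: "0 \<le> y" and y_le_c_f: "y \<le> c!f"
    and f_le_p: "f \<le> p" and p_le_m: "p \<le> m"
    and d_p_le_y: "p = m \<or> d!p \<le> y" and y_less_d: "p = f \<or> y < d!(p-1)"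
begin

lemma pred_witness_sorted: "sorted_wrt (\<ge>) (pred_witness p y)"
proof (rule sorted_wrt_geI)
  fix j assume "Suc j < length (pred_witness p y)"
  then have j: "j < m" by simp
  consider "Suc j < p" | "Suc j = p" | "j = p" | "p < j" by linarith
  then show "pred_witness p y ! Suc j \<le> pred_witness p y ! j"
  proof cases
    case 1
    then show ?thesis using j c_antimono[of j "Suc j"] d_antimono[of j "Suc j"] p_le_m
      by (auto simp: pred_witness_nth)
  next
    case 2
    have "y \<le> min (c!j) (d!j)"
    proof (cases "p = f")
      case True
      then have "c!p < d!j" using f_drop 2 by auto
      then show ?thesis using y_le_c_f True c_antimono[of j p] 2 f_le_l l_less_m by simp
    next
      case False
      then have "y < d!j" using y_less_d 2 by auto
      moreover have "d!j \<le> c!j" using d_le_c_from_f[OF d_f'_le_c_f, of j] f_le_p False 2 j by simp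
      ultimately show ?thesis by simp
    qed
    then show ?thesis using 2 j by (simp add: pred_witness_nth)
  next
    case 3
    then show ?thesis using d_p_le_y j by (simp add: pred_witness_nth)
  next
    case 4
    then show ?thesis using j d_antimono[of "j-1" j] by (simp add: pred_witness_nth)
  qed
qed

lemma pred_witness_nonneg: "\<forall>x\<in>set (pred_witness p y). 0 \<le> x"
  using y_nonneg c_nonneg d_nonneg p_le_m by (auto simp: pred_witness_def min_def)

lemma sum_pred_witness: "sum_list (pred_witness p y) = (\<Sum>j<m. min (c!j) (d!j)) + y"
proof -
  let ?g = "pred_witness p y"
  have "sum_list ?g = ?g!p + (\<Sum>j<m. if j < p then ?g!j else ?g!Suc j)"
    using sum_lessThan_Suc_remove[of p m "(!) ?g"] p_le_m by (simp add: sum_list_conv_sum_lessThan)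
  also have "(\<Sum>j<m. if j < p then ?g!j else ?g!Suc j) = (\<Sum>j<m. min (c!j) (d!j))"
    by (rule sum.cong)
      (use d_le_c_from_f[OF d_f'_le_c_f] f_le_p in \<open>auto simp: pred_witness_nth min_absorb2\<close>)
  finally show ?thesis using p_le_m by (simp add: pred_witness_nth)
qed

lemma gmaj_pred_witness_d: "gmaj (pred_witness p y) d"
  unfolding gmaj_iff using length_d pred_witness_sorted sorted_d p_le_m
  by (intro conjI exI[of _ p]) (auto simp: pred_witness_nth)

lemma gmaj_pred_witness_c: "gmaj (pred_witness p y) c"
  unfolding gmaj_iff
proof (intro conjI exI[of _ "max p (Suc l)"] allI impI)
  show "max p (Suc l) \<le> length c" using p_le_m l_less_m length_c by simp
next
  fix j assume j: "j < max p (Suc l)"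
  then have "j < m" using p_le_m l_less_m by auto
  consider "j < p" | "j = p" | "p < j" by linarith
  then show "pred_witness p y ! j \<le> c!j"
  proof cases
    case 1
    then show ?thesis using \<open>j < m\<close> by (simp add: pred_witness_nth)
  next
    case 2
    have "y \<le> c!p"
    proof (cases "p = f")
      case False
      then have "y < d!(p-1)" using y_less_d by simp
      moreover have "d!(p-1) \<le> c!p" using f_last[of p] False f_le_p j 2 by simp
      ultimately show ?thesis by simp
    qed (use y_le_c_f in simp)
    then show ?thesis using 2 \<open>j < m\<close> by (simp add: pred_witness_nth)
  next
    case 3
    then have "d!(j-1) \<le> c!j" using f_last[of j] f_le_p j by simp
    then show ?thesis using 3 \<open>j < m\<close> by (simp add: pred_witness_nth)
  qed
next
  fix j assume "max p (Suc l) \<le> j" "j < length c"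
  then show "c!j = pred_witness p y ! Suc j"
    using agree_after_l[of j] length_c by (simp add: pred_witness_nth)
qed (use length_c pred_witness_sorted sorted_c in auto)

end

lemma common_pred_exists_of_d_f'_le_c_f:
  assumes "d!f' \<le> c!f" "0 \<le> S" "S \<le> (\<Sum>j<m. min (c!j) (d!j)) + c!f"
  shows "\<exists>g. is_partition g \<and> length g = m + 1 \<and> sum_list g = S \<and> gmaj g c \<and> gmaj g d"
proof (cases "S \<le> (\<Sum>j<m. min (c!j) (d!j))")
  case True
  then show ?thesis using common_pred_exists_le_sum_min assms(2) by blast
next
  case False
  define y where "y = S - (\<Sum>j<m. min (c!j) (d!j))"
  have y: "0 \<le> y" "y \<le> c!f" using False assms(3) by (auto simp: y_def)
  have "f \<le> m" using f_le_l l_less_m by simp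
  then obtain p where p: "f \<le> p" "p \<le> m" "p = m \<or> d!p \<le> y" "p = f \<or> y < d!(p-1)"
    by (rule obtain_insertion_index)
  note witness = assms(1) y p
  show ?thesis
  proof (intro exI conjI)
    show "is_partition (pred_witness p y)"
      using pred_witness_sorted[OF witness] pred_witness_nonneg[OF witness]
      by (simp add: is_partition_def)
    show "sum_list (pred_witness p y) = S" using sum_pred_witness[OF witness] by (simp add: y_def)
  qed (use gmaj_pred_witness_c[OF witness] gmaj_pred_witness_d[OF witness] in auto)
qed

lemma common_pred_iff:
  assumes "0 \<le> S"
  shows "(\<exists>g. is_partition g \<and> length g = m + 1 \<and> sum_list g = S \<and> gmaj g c \<and> gmaj g d)
    \<longleftrightarrow> S \<le> (\<Sum>j<m. min (c!j) (d!j)) + max (c!f) (d!f')"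
proof
  assume "\<exists>g. is_partition g \<and> length g = m + 1 \<and> sum_list g = S \<and> gmaj g c \<and> gmaj g d"
  then obtain g where "length g = Suc m" "sum_list g = S" "gmaj g c" "gmaj g d" by auto
  then show "S \<le> (\<Sum>j<m. min (c!j) (d!j)) + max (c!f) (d!f')" using common_pred_sum_le by blast
next
  assume bound: "S \<le> (\<Sum>j<m. min (c!j) (d!j)) + max (c!f) (d!f')"
  show "\<exists>g. is_partition g \<and> length g = m + 1 \<and> sum_list g = S \<and> gmaj g c \<and> gmaj g d"
  proof (cases "d!f' \<le> c!f")
    case True
    then show ?thesis using common_pred_exists_of_d_f'_le_c_f[OF True assms] bound by simp
  next
    case False
    have "(\<Sum>j<m. min (d!j) (c!j)) = (\<Sum>j<m. min (c!j) (d!j))" by (simp add: min.commute)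
    then have "\<exists>g. is_partition g \<and> length g = m + 1 \<and> sum_list g = S \<and> gmaj g d \<and> gmaj g c"
      using partition_pair.common_pred_exists_of_d_f'_le_c_f[OF swapped _ assms] False bound by simp
    then show ?thesis by blast
  qed
qed

subsection \<open>Lower bounds on the sum of a common successor\<close>

context
  fixes e :: "int list" and hc hz :: nat
  assumes length_e: "length e = m - 1"
    and hc_le_hz: "hc \<le> hz" and hz_le: "hz \<le> m - 1"
    and c_le_e: "\<forall>j<hc. c!j \<le> e!j" and e_eq_c: "\<forall>j. hc \<le> j \<longrightarrow> j < m - 1 \<longrightarrow> e!j = c!Suc j"
    and d_le_e: "\<forall>j<hz. d!j \<le> e!j" and e_eq_d: "\<forall>j. hz \<le> j \<longrightarrow> j < m - 1 \<longrightarrow> e!j = d!Suc j"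
begin

lemma succ_l_le_hz: "l \<le> hz"
proof (rule ccontr)
  assume "\<not> l \<le> hz"
  then have "c!l = d!l" using e_eq_c[rule_format, of "l-1"] e_eq_d[rule_format, of "l-1"] hc_le_hz l_less_m
    by simp
  then show False using differ_at_l by simp
qed

lemma succ_max_at_switch_le: "max (c!hc) (d!hc) \<le> max (c!f) (d!f')"
proof (cases "hc = hz")
  case True
  then have "max (c!hc) (d!hc) \<le> max (c!l) (d!l)"
    using c_antimono[of l hc] d_antimono[of l hc] succ_l_le_hz hz_le l_less_m by (intro max.mono) auto
  also have "\<dots> \<le> max (c!f) (d!f')"
    using c_antimono[OF f_le_l] d_antimono[OF f'_le_l] l_less_m by auto
  finally show ?thesis .
next
  case False
  then have "hc < hz" using hc_le_hz by simp
  have "f \<le> hc"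
  proof (rule ccontr)
    assume "\<not> f \<le> hc"
    then have "hc < f" "f - 1 < hz" using f_le_l succ_l_le_hz by auto
    then have "c!f < d!(f-1)" "e!(f-1) = c!f" "d!(f-1) \<le> e!(f-1)"
      using f_drop e_eq_c d_le_e hz_le by auto
    then show False by simp
  qed
  have "Suc hc < m" using \<open>hc < hz\<close> hz_le l_less_m by simp
  have "d!hc \<le> e!hc" using d_le_e \<open>hc < hz\<close> by simp
  also have "\<dots> = c!Suc hc" using e_eq_c \<open>Suc hc < m\<close> by simp
  also have "\<dots> \<le> c!hc" using c_antimono[of hc "Suc hc"] \<open>Suc hc < m\<close> by simp
  finally show ?thesis using c_antimono[of f hc] \<open>f \<le> hc\<close> \<open>Suc hc < m\<close> by (auto simp: max_def)
qed

lemma succ_entry_eq: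
  assumes "hc \<le> j" "j < m - 1"
  shows "max (c!Suc j) (d!Suc j) = e!j"
proof (cases "hz \<le> j")
  case True
  then show ?thesis using e_eq_c[rule_format, of j] e_eq_d[rule_format, of j] assms by simp
next
  case False
  then have "d!Suc j \<le> d!j" "d!j \<le> e!j" "e!j = c!Suc j"
    using d_antimono[of j "Suc j"] d_le_e[rule_format, of j] e_eq_c[rule_format, of j] assms by auto
  then show ?thesis by simp
qed

lemma succ_entry_ge:
  "j < m - 1 \<Longrightarrow> (if j < hc then max (c!j) (d!j) else max (c!Suc j) (d!Suc j)) \<le> e!j"
  using c_le_e d_le_e hc_le_hz succ_entry_eq by auto

lemma succ_sum_bounds:
  "(\<Sum>j<m. max (c!j) (d!j)) - max (c!f) (d!f') \<le> sum_list e \<and>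
   (sum_list e = (\<Sum>j<m. max (c!j) (d!j)) - max (c!0) (d!0) \<or>
    (2 \<le> m \<and> (\<Sum>j<m. max (c!j) (d!j)) - max (c!1) (d!1) \<le> sum_list e))"
proof -
  let ?mx = "\<lambda>j. max (c!j) (d!j)"
  let ?rest = "\<Sum>j<m-1. if j < hc then ?mx j else ?mx (Suc j)"
  have split: "(\<Sum>j<m. ?mx j) = ?mx hc + ?rest"
    using sum_lessThan_Suc_remove[of hc "m-1" ?mx] hz_le hc_le_hz l_less_m by simp
  have sum_e: "sum_list e = (\<Sum>j<m-1. e!j)" using length_e by (simp add: sum_list_conv_sum_lessThan)
  have rest_le: "?rest \<le> sum_list e" unfolding sum_e by (rule sum_mono) (simp add: succ_entry_ge)
  have "(\<Sum>j<m. ?mx j) - max (c!f) (d!f') \<le> sum_list e"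
    using split rest_le succ_max_at_switch_le by linarith
  moreover have "sum_list e = (\<Sum>j<m. ?mx j) - ?mx 0" if "hc = 0"
  proof -
    have "?rest = sum_list e"
      unfolding sum_e by (rule sum.cong) (use that succ_entry_eq in simp_all)
    then show ?thesis using split that by simp
  qed
  moreover have "2 \<le> m \<and> (\<Sum>j<m. ?mx j) - ?mx 1 \<le> sum_list e" if "hc \<noteq> 0"
  proof -
    have "1 \<le> hc" "hc < m" "2 \<le> m" using that hz_le hc_le_hz l_less_m by auto
    have "?mx hc \<le> ?mx 1"
      using c_antimono[OF \<open>1 \<le> hc\<close> \<open>hc < m\<close>] d_antimono[OF \<open>1 \<le> hc\<close> \<open>hc < m\<close>] by (rule max.mono)
    then show ?thesis using split rest_le \<open>2 \<le> m\<close> by linarith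
  qed
  ultimately show ?thesis by blast
qed

end

lemma common_succ_sum_bounds:
  assumes "gmaj c e" "gmaj d e"
  shows "(\<Sum>j<m. max (c!j) (d!j)) - max (c!f) (d!f') \<le> sum_list e \<and>
   (sum_list e = (\<Sum>j<m. max (c!j) (d!j)) - max (c!0) (d!0) \<or>
    (2 \<le> m \<and> (\<Sum>j<m. max (c!j) (d!j)) - max (c!1) (d!1) \<le> sum_list e))"
proof -
  have length_e: "length e = m - 1" using assms(1) length_c unfolding gmaj_iff by auto
  obtain hc where hc: "hc \<le> m - 1" "\<forall>j<hc. c!j \<le> e!j" "\<forall>j. hc \<le> j \<longrightarrow> j < m - 1 \<longrightarrow> e!j = c!Suc j"
    using assms(1) length_e unfolding gmaj_iff by auto
  obtain hz where hz: "hz \<le> m - 1" "\<forall>j<hz. d!j \<le> e!j" "\<forall>j. hz \<le> j \<longrightarrow> j < m - 1 \<longrightarrow> e!j = d!Suc j"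
    using assms(2) length_e unfolding gmaj_iff by auto
  show ?thesis
  proof (cases "hc \<le> hz")
    case True
    then show ?thesis by (rule succ_sum_bounds[OF length_e _ hz(1) hc(2,3) hz(2,3)])
  next
    case False
    then have "hz \<le> hc" by simp
    have "(\<Sum>j<m. max (d!j) (c!j)) - max (d!f') (c!f) \<le> sum_list e \<and>
      (sum_list e = (\<Sum>j<m. max (d!j) (c!j)) - max (d!0) (c!0) \<or>
       (2 \<le> m \<and> (\<Sum>j<m. max (d!j) (c!j)) - max (d!1) (c!1) \<le> sum_list e))"
      by (rule partition_pair.succ_sum_bounds[OF swapped length_e \<open>hz \<le> hc\<close> hc(1) hz(2,3) hc(2,3)])
    then show ?thesis by (simp add: max.commute)
  qed
qed

subsection \<open>Existence of a common successor\<close>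

definition succ_witness :: "nat \<Rightarrow> int \<Rightarrow> int list" where
  "succ_witness h k =
     map (\<lambda>j. (if j < h then max (c!j) (d!j) else c!Suc j) + (if j = 0 then k else 0)) [0..<m-1]"

lemma length_succ_witness [simp]: "length (succ_witness h k) = m - 1"
  by (simp add: succ_witness_def)

lemma succ_witness_nth: "j < m - 1 \<Longrightarrow>
    succ_witness h k ! j = (if j < h then max (c!j) (d!j) else c!Suc j) + (if j = 0 then k else 0)"
  by (simp add: succ_witness_def)

context
  fixes h :: nat and k :: int
  assumes h_le: "h \<le> m - 1" and d_le_c_after_h: "\<forall>i. h < i \<longrightarrow> i \<le> l \<longrightarrow> d!(i-1) \<le> c!i"
    and k_nonneg: "0 \<le> k" and k_zero: "h = 0 \<longrightarrow> k = 0"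
begin

lemma d_le_c_beyond_h: "h < i \<Longrightarrow> i < m \<Longrightarrow> d!i \<le> c!i"
proof (cases "i \<le> l")
  case True
  assume "h < i" "i < m"
  then show ?thesis using d_le_c_after_h True d_antimono[of "i-1" i] by force
qed (use agree_after_l in simp)

lemma succ_witness_sorted: "sorted_wrt (\<ge>) (succ_witness h k)"
proof (rule sorted_wrt_geI)
  fix j assume "Suc j < length (succ_witness h k)"
  then have j: "Suc j < m - 1" by simp
  consider "Suc j < h" | "Suc j = h" | "h \<le> j" by linarith
  then show "succ_witness h k ! Suc j \<le> succ_witness h k ! j"
  proof cases
    case 1
    have "max (c!Suc j) (d!Suc j) \<le> max (c!j) (d!j)"
      using j c_antimono[of j "Suc j"] d_antimono[of j "Suc j"] by (intro max.mono) auto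
    then show ?thesis using 1 j k_nonneg by (auto simp: succ_witness_nth)
  next
    case 2
    have "Suc (Suc j) < m" using j by linarith
    then have "c!Suc (Suc j) \<le> max (c!j) (d!j)"
      using c_antimono[of j "Suc (Suc j)"] by (simp add: le_max_iff_disj)
    then show ?thesis using 2 j k_nonneg by (auto simp: succ_witness_nth)
  next
    case 3
    then show ?thesis using j c_antimono[of "Suc j" "Suc (Suc j)"] k_zero by (auto simp: succ_witness_nth)
  qed
qed

lemma succ_witness_nonneg: "\<forall>x\<in>set (succ_witness h k). 0 \<le> x"
  using c_nonneg d_nonneg k_nonneg by (fastforce simp: succ_witness_def)

lemma sum_succ_witness:
  "sum_list (succ_witness h k) = (\<Sum>j<m. max (c!j) (d!j)) - max (c!h) (d!h) + k"
proof -
  let ?mx = "\<lambda>j. max (c!j) (d!j)"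
  have "sum_list (succ_witness h k) =
      (\<Sum>j<m-1. (if j < h then ?mx j else c!Suc j) + (if j = 0 then k else 0))"
    by (simp add: succ_witness_def sum_list_map_upt_zero)
  also have "\<dots> = (\<Sum>j<m-1. if j < h then ?mx j else c!Suc j) + k"
    using k_zero h_le by (cases "h = 0") (auto simp: sum.distrib)
  also have "(\<Sum>j<m-1. if j < h then ?mx j else c!Suc j) = (\<Sum>j<m-1. if j < h then ?mx j else ?mx (Suc j))"
    by (rule sum.cong) (use d_le_c_beyond_h in \<open>auto simp: max_absorb1\<close>)
  also have "\<dots> = (\<Sum>j<m. ?mx j) - ?mx h"
    using sum_lessThan_Suc_remove[of h "m-1" ?mx] h_le l_less_m by simp
  finally show ?thesis .
qed

lemma gmaj_c_succ_witness: "gmaj c (succ_witness h k)"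
  unfolding gmaj_iff using length_c l_less_m succ_witness_sorted sorted_c h_le k_zero k_nonneg
  by (intro conjI exI[of _ h]) (auto simp: succ_witness_nth)

lemma gmaj_d_succ_witness: "gmaj d (succ_witness h k)"
  unfolding gmaj_iff
proof (intro conjI exI[of _ "max h l"] allI impI)
  show "max h l \<le> length (succ_witness h k)" using h_le l_less_m by simp
next
  fix j assume j: "j < max h l"
  then have "j < m - 1" using h_le l_less_m by auto
  show "d!j \<le> succ_witness h k ! j"
  proof (cases "j < h")
    case False
    then have "d!j \<le> c!Suc j" using d_le_c_after_h[rule_format, of "Suc j"] j by simp
    then show ?thesis using \<open>j < m - 1\<close> k_nonneg False by (auto simp: succ_witness_nth)
  qed (use \<open>j < m - 1\<close> k_nonneg in \<open>auto simp: succ_witness_nth le_max_iff_disj add_increasing2\<close>)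
next
  fix j assume "max h l \<le> j" "j < length (succ_witness h k)"
  then show "succ_witness h k ! j = d!Suc j"
    using agree_after_l[of "Suc j"] k_zero by (auto simp: succ_witness_nth)
qed (use length_d l_less_m succ_witness_sorted sorted_d in auto)

lemma common_succ_exists_sum:
  "\<exists>e. is_partition e \<and> length e = m - 1 \<and>
     sum_list e = (\<Sum>j<m. max (c!j) (d!j)) - max (c!h) (d!h) + k \<and> gmaj c e \<and> gmaj d e"
  using succ_witness_sorted succ_witness_nonneg sum_succ_witness gmaj_c_succ_witness gmaj_d_succ_witness
  by (intro exI[of _ "succ_witness h k"]) (simp add: is_partition_def)

end

lemma common_succ_exists_of_f_pos:
  assumes "1 \<le> f" "1 \<le> f'" "(\<Sum>j<m. max (c!j) (d!j)) - max (c!f) (d!f') \<le> E"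
  shows "\<exists>e. is_partition e \<and> length e = m - 1 \<and> sum_list e = E \<and> gmaj c e \<and> gmaj d e"
proof (cases "d!f' \<le> c!f")
  case True
  have "max (c!f) (d!f) = c!f" using d_le_c_from_f[OF True, of f] f_le_l l_less_m by simp
  then show ?thesis
    using common_succ_exists_sum[of f "E - ((\<Sum>j<m. max (c!j) (d!j)) - c!f)"]
      f_le_l l_less_m f_last assms True by simp
next
  case False
  have "max (d!f') (c!f') = d!f'"
    using partition_pair.d_le_c_from_f[OF swapped, of f'] f'_le_l l_less_m False by simp
  then have "\<exists>e. is_partition e \<and> length e = m - 1 \<and> sum_list e = E \<and> gmaj d e \<and> gmaj c e"
    using partition_pair.common_succ_exists_sum[OF swapped, of f' "E - ((\<Sum>j<m. max (c!j) (d!j)) - d!f')"]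
      f'_le_l l_less_m f'_last assms False by (simp add: max.commute)
  then show ?thesis by blast
qed

lemma common_succ_exists_of_f_zero:
  assumes "f = 0"
    and "E = (\<Sum>j<m. max (c!j) (d!j)) - max (c!0) (d!0) \<or>
      (2 \<le> m \<and> (\<Sum>j<m. max (c!j) (d!j)) - max (c!1) (d!1) \<le> E)"
  shows "\<exists>e. is_partition e \<and> length e = m - 1 \<and> sum_list e = E \<and> gmaj c e \<and> gmaj d e"
  using assms(2)
proof
  assume "E = (\<Sum>j<m. max (c!j) (d!j)) - max (c!0) (d!0)"
  then show ?thesis using common_succ_exists_sum[of 0 0] f_last assms(1) by simp
next
  assume E: "2 \<le> m \<and> (\<Sum>j<m. max (c!j) (d!j)) - max (c!1) (d!1) \<le> E"
  then have "1 \<le> m - 1" by arith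
  then show ?thesis
    using E common_succ_exists_sum[of 1 "E - ((\<Sum>j<m. max (c!j) (d!j)) - max (c!1) (d!1))"]
      f_last assms(1) by simp
qed

lemma common_succ_exists_of_f_or_f'_zero:
  assumes "f = 0 \<or> f' = 0"
    and "E = (\<Sum>j<m. max (c!j) (d!j)) - max (c!0) (d!0) \<or>
      (2 \<le> m \<and> (\<Sum>j<m. max (c!j) (d!j)) - max (c!1) (d!1) \<le> E)"
  shows "\<exists>e. is_partition e \<and> length e = m - 1 \<and> sum_list e = E \<and> gmaj c e \<and> gmaj d e"
proof (cases "f = 0")
  case True
  then show ?thesis using common_succ_exists_of_f_zero assms(2) by blast
next
  case False
  then have "\<exists>e. is_partition e \<and> length e = m - 1 \<and> sum_list e = E \<and> gmaj d e \<and> gmaj c e"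
    using partition_pair.common_succ_exists_of_f_zero[OF swapped, of E] assms by (simp add: max.commute)
  then show ?thesis by blast
qed

lemma common_succ_iff_of_f_pos:
  assumes "1 \<le> f" "1 \<le> f'"
  shows "(\<exists>e. is_partition e \<and> length e = m - 1 \<and> sum_list e = E \<and> gmaj c e \<and> gmaj d e)
    \<longleftrightarrow> (\<Sum>j<m. max (c!j) (d!j)) - max (c!f) (d!f') \<le> E"
  using common_succ_sum_bounds common_succ_exists_of_f_pos[OF assms] by blast

lemma common_succ_iff_of_f_or_f'_zero:
  assumes "f = 0 \<or> f' = 0"
  shows "(\<exists>e. is_partition e \<and> length e = m - 1 \<and> sum_list e = E \<and> gmaj c e \<and> gmaj d e)
    \<longleftrightarrow> (E = (\<Sum>j<m. max (c!j) (d!j)) - max (c!0) (d!0) \<or>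
         (2 \<le> m \<and> (\<Sum>j<m. max (c!j) (d!j)) - max (c!1) (d!1) \<le> E))"
  using common_succ_sum_bounds common_succ_exists_of_f_or_f'_zero[OF assms] by blast

lemma max_at_f_f'_of_f_zero:
  assumes "f = 0"
  shows "max (c!f) (d!f') = max (c!0) (d!0)"
proof (cases "l = 0")
  case True
  then show ?thesis using assms f'_le_l by simp
next
  case False
  then have "d!0 \<le> c!1" using f_last[of 1] assms by simp
  then have "d!0 \<le> c!0" using c_antimono[of 0 1] False l_less_m by simp
  moreover have "d!f' \<le> d!0" using d_antimono[of 0 f'] f'_le_l l_less_m by simp
  ultimately show ?thesis using assms by simp
qed

lemma max_at_f_f'_of_zero: "f = 0 \<or> f' = 0 \<Longrightarrow> max (c!f) (d!f') = max (c!0) (d!0)"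
  using max_at_f_f'_of_f_zero partition_pair.max_at_f_f'_of_f_zero[OF swapped] by (metis max.commute)

lemma max_entx_after_f_f'_of_f_zero:
  assumes "f = 0" "2 \<le> m"
  shows "max (entx c (f+2)) (entx d (f'+2)) = ereal (max (c!1) (d!1))"
proof -
  have c_entry: "entx c (f+2) = ereal (c!1)" using assms length_c by (simp add: entx_def)
  show ?thesis
  proof (cases "l = 0")
    case True
    then have "f' = 0" using f'_le_l by simp
    then show ?thesis using c_entry assms(2) length_d by (auto simp: entx_def max_def)
  next
    case False
    then have "d!0 \<le> c!1" using f_last[of 1] assms(1) by simp
    then have "d!1 \<le> c!1" using d_antimono[of 0 1] assms(2) by simp
    moreover have "entx d (f'+2) \<le> ereal (d!1)"
      using d_antimono[of 1 "f'+1"] length_d by (auto simp: entx_def)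
    ultimately have "entx d (f'+2) \<le> entx c (f+2)"
      using c_entry by (metis ereal_less_eq(3) of_int_le_iff order_trans)
    then show ?thesis using c_entry \<open>d!1 \<le> c!1\<close> by (simp add: max_absorb1)
  qed
qed

lemma max_entx_after_f_f':
  "f = 0 \<or> f' = 0 \<Longrightarrow> 2 \<le> m \<Longrightarrow> max (entx c (f+2)) (entx d (f'+2)) = ereal (max (c!1) (d!1))"
  using max_entx_after_f_f'_of_f_zero partition_pair.max_entx_after_f_f'_of_f_zero[OF swapped]
  by (metis max.commute)

end

subsection \<open>The indices \<open>\<ell>\<close>, f and f'\<close>

lemma lidx_spec:
  assumes "length c = m" "length d = m" "c \<noteq> d"
  shows "1 \<le> lidx c d" "lidx c d \<le> m" "c!(lidx c d - 1) \<noteq> d!(lidx c d - 1)"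
    and "\<And>j. lidx c d - 1 < j \<Longrightarrow> j < m \<Longrightarrow> c!j = d!j"
proof -
  define A where "A = {i \<in> {1..length c}. c ! (i - 1) \<noteq> d ! (i - 1)}"
  have lidx: "lidx c d = Max A" by (simp add: lidx_def A_def)
  obtain j where "j < m" "c!j \<noteq> d!j" using assms by (metis nth_equalityI)
  then have "Suc j \<in> A" using assms by (simp add: A_def)
  then have "A \<noteq> {}" by blast
  moreover have "finite A" by (simp add: A_def)
  ultimately have "Max A \<in> A" by (rule Max_in[rotated])
  then show "1 \<le> lidx c d" "lidx c d \<le> m" "c!(lidx c d - 1) \<noteq> d!(lidx c d - 1)"
    using lidx assms by (auto simp: A_def)
  show "c!j = d!j" if "lidx c d - 1 < j" "j < m" for j
  proof (rule ccontr)
    assume "c!j \<noteq> d!j"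
    then have "Suc j \<in> A" using that assms by (simp add: A_def)
    then have "Suc j \<le> Max A" by (simp add: A_def)
    then show False using lidx that by simp
  qed
qed

lemma lidx_commute: "length c = length d \<Longrightarrow> lidx d c = lidx c d"
  unfolding lidx_def by metis

lemma fidx_spec:
  assumes "length c = m" "length d = m" "1 \<le> lidx c d" "lidx c d \<le> m"
  shows "1 \<le> fidx c d" "fidx c d \<le> lidx c d"
    and "fidx c d - 1 = 0 \<or> c!(fidx c d - 1) < d!(fidx c d - 1 - 1)"
    and "\<And>i. fidx c d - 1 < i \<Longrightarrow> i \<le> lidx c d - 1 \<Longrightarrow> d!(i-1) \<le> c!i"
proof -
  define B where "B = {i \<in> {1..lidx c d}. entx c i < entx d (i - 1)}"
  have fidx: "fidx c d = Max B" by (simp add: fidx_def B_def)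
  have "1 \<in> B" using assms by (simp add: B_def entx_def)
  then have "B \<noteq> {}" by blast
  moreover have "finite B" by (simp add: B_def)
  ultimately have "Max B \<in> B" by (rule Max_in[rotated])
  then have fidx_drop: "entx c (fidx c d) < entx d (fidx c d - 1)" using fidx by (simp add: B_def)
  note fidx_max = Max_ge[OF \<open>finite B\<close>, folded fidx]
  show "1 \<le> fidx c d" "fidx c d \<le> lidx c d" using \<open>Max B \<in> B\<close> fidx by (auto simp: B_def)
  show "fidx c d - 1 = 0 \<or> c!(fidx c d - 1) < d!(fidx c d - 1 - 1)"
  proof (cases "fidx c d - 1 = 0")
    case False
    then have "2 \<le> fidx c d" using \<open>1 \<le> fidx c d\<close> by simp
    then obtain k where "fidx c d = Suc (Suc k)" by (metis add_2_eq_Suc le_Suc_ex)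
    moreover have "fidx c d \<le> m" using \<open>fidx c d \<le> lidx c d\<close> assms(4) by simp
    ultimately show ?thesis using fidx_drop assms(1,2) by (simp add: entx_def)
  qed simp
  show "d!(i-1) \<le> c!i" if "fidx c d - 1 < i" "i \<le> lidx c d - 1" for i
  proof -
    have "Suc i \<notin> B" using fidx_max that by fastforce
    moreover have "Suc i \<in> {1..lidx c d}" "1 \<le> i" "Suc i \<le> m" using that assms by auto
    ultimately show ?thesis using assms(1,2) by (auto simp: B_def entx_def)
  qed
qed

locale distinct_partitions =
  fixes c d :: "int list" and m :: nat
  assumes partition_c: "is_partition c" and partition_d: "is_partition d"
    and length_c_eq: "length c = m" and length_d_eq: "length d = m" and c_neq_d: "c \<noteq> d"
begin

lemma lidx_fidx:
  "1 \<le> lidx c d" "lidx c d \<le> m" "1 \<le> fidx c d" "1 \<le> fidx d c" "fidx c d \<le> m" "fidx d c \<le> m"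
  using lidx_spec[OF length_c_eq length_d_eq c_neq_d]
    fidx_spec(1,2)[OF length_c_eq length_d_eq] fidx_spec(1,2)[OF length_d_eq length_c_eq]
    lidx_commute[of c d] length_c_eq length_d_eq
  by auto

sublocale partition_pair c d m "lidx c d - 1" "fidx c d - 1" "fidx d c - 1"
proof -
  note lidx = lidx_spec[OF length_c_eq length_d_eq c_neq_d]
  have "lidx d c = lidx c d" using lidx_commute length_c_eq length_d_eq by simp
  note fidx_c = fidx_spec[OF length_c_eq length_d_eq lidx(1,2)]
    and fidx_d = fidx_spec[OF length_d_eq length_c_eq, unfolded \<open>lidx d c = lidx c d\<close>, OF lidx(1,2)]
  show "partition_pair c d m (lidx c d - 1) (fidx c d - 1) (fidx d c - 1)"
    using partition_c partition_d length_c_eq length_d_eq lidx fidx_c fidx_d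
    by unfold_locales (auto simp: is_partition_def)
qed

lemma max_entx_fidx:
  "max (entx c (fidx c d)) (entx d (fidx d c)) = ereal (of_int (max (c!(fidx c d - 1)) (d!(fidx d c - 1))))"
  using lidx_fidx length_c length_d by (simp add: entx_def of_int_max)

lemma max_entx_after_fidx:
  assumes "fidx c d = 1 \<or> fidx d c = 1"
  shows "max (entx c (fidx c d + 1)) (entx d (fidx d c + 1)) =
    (if 2 \<le> m then ereal (of_int (max (c!1) (d!1))) else -\<infinity>)"
proof (cases "2 \<le> m")
  case True
  have "fidx c d + 1 = (fidx c d - 1) + 2" "fidx d c + 1 = (fidx d c - 1) + 2" using lidx_fidx by auto
  then show ?thesis using max_entx_after_f_f'[OF _ True] assms True by auto
next
  case False
  then show ?thesis using lidx_fidx length_c length_d by (simp add: entx_def)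
qed

lemma ex_common_pred_iff:
  assumes "0 \<le> S"
  shows "(\<exists>g. is_partition g \<and> length g = m + 1 \<and> sum_list g = S \<and> gmaj g c \<and> gmaj g d)
    \<longleftrightarrow> ereal (of_int S) \<le> ereal (of_int (\<Sum>i=1..m. min (c ! (i - 1)) (d ! (i - 1))))
          + max (entx c (fidx c d)) (entx d (fidx d c))"
  unfolding common_pred_iff[OF assms] sum_one_based[of "\<lambda>j. min (c!j) (d!j)"] max_entx_fidx ereal_of_int_le_add_iff ..

lemma ex_common_succ_iff_of_fidx_gt_1:
  assumes "fidx c d > 1 \<and> fidx d c > 1"
  shows "(\<exists>e. is_partition e \<and> length e = m - 1 \<and> sum_list e = E \<and> gmaj c e \<and> gmaj d e)
    \<longleftrightarrow> ereal (of_int E) \<ge> ereal (of_int (\<Sum>i=1..m. max (c ! (i - 1)) (d ! (i - 1))))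
          - max (entx c (fidx c d)) (entx d (fidx d c))"
proof -
  have "1 \<le> fidx c d - 1" "1 \<le> fidx d c - 1" using assms by auto
  then show ?thesis
    unfolding sum_one_based[of "\<lambda>j. max (c!j) (d!j)"] max_entx_fidx ereal_of_int_diff_le_iff
    by (rule common_succ_iff_of_f_pos)
qed

lemma ex_common_succ_iff_of_fidx_eq_1:
  assumes "fidx c d = 1 \<or> fidx d c = 1"
  shows "(\<exists>e. is_partition e \<and> length e = m - 1 \<and> sum_list e = E \<and> gmaj c e \<and> gmaj d e)
    \<longleftrightarrow> (ereal (of_int E) = ereal (of_int (\<Sum>i=1..m. max (c ! (i - 1)) (d ! (i - 1))))
          - max (entx c (fidx c d)) (entx d (fidx d c))
        \<or> ereal (of_int E) \<ge> ereal (of_int (\<Sum>i=1..m. max (c ! (i - 1)) (d ! (i - 1))))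
          - max (entx c (fidx c d + 1)) (entx d (fidx d c + 1)))"
proof -
  have f0: "fidx c d - 1 = 0 \<or> fidx d c - 1 = 0" using assms by auto
  note unfold_ereal = sum_one_based[of "\<lambda>j. max (c!j) (d!j)"] max_entx_fidx max_entx_after_fidx[OF assms]
    common_succ_iff_of_f_or_f'_zero[OF f0] max_at_f_f'_of_zero[OF f0] ereal_of_int_eq_diff_iff
  show ?thesis
  proof (cases "2 \<le> m")
    case True
    then show ?thesis unfolding unfold_ereal if_P[OF True] ereal_of_int_diff_le_iff by simp
  next
    case False
    then show ?thesis unfolding unfold_ereal if_not_P[OF False] by simp
  qed
qed

lemma ex_common_succ_iff_of_fidx_eq_1_explicit:
  assumes "fidx c d = 1 \<or> fidx d c = 1" "m \<ge> 2"
  shows "(\<exists>e. is_partition e \<and> length e = m - 1 \<and> sum_list e = E \<and> gmaj c e \<and> gmaj d e)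
    \<longleftrightarrow> (E = (\<Sum>i=2..m. max (c ! (i - 1)) (d ! (i - 1)))
        \<or> E \<ge> max (c ! 0) (d ! 0) + (\<Sum>i=3..m. max (c ! (i - 1)) (d ! (i - 1))))"
proof -
  have f0: "fidx c d - 1 = 0 \<or> fidx d c - 1 = 0" using assms by auto
  have "(\<Sum>i=2..m. max (c ! (i - 1)) (d ! (i - 1))) = (\<Sum>j<m. max (c!j) (d!j)) - max (c!0) (d!0)"
    using sum_one_based_from[of 1 m "\<lambda>j. max (c!j) (d!j)"] assms(2) by (simp add: numeral_2_eq_2)
  moreover have "(\<Sum>i=3..m. max (c ! (i - 1)) (d ! (i - 1))) =
      (\<Sum>j<m. max (c!j) (d!j)) - (max (c!0) (d!0) + max (c!1) (d!1))"
    using sum_one_based_from[of 2 m "\<lambda>j. max (c!j) (d!j)"] assms(2) by (simp add: numeral_2_eq_2 numeral_3_eq_3)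
  ultimately show ?thesis using common_succ_iff_of_f_or_f'_zero[OF f0] assms(2) by auto
qed

end

theorem lemma5p3:
  fixes S E :: int and c d :: "int list" and m :: nat
  assumes "0 \<le> S" and "0 \<le> E"
    and "is_partition c" and "is_partition d"
    and "length c = m" and "length d = m" and "c \<noteq> d"
  shows
   "((\<exists>g. is_partition g \<and> length g = m + 1 \<and> sum_list g = S \<and> gmaj g c \<and> gmaj g d)
       \<longleftrightarrow> ereal (of_int S) \<le> ereal (of_int (\<Sum>i=1..m. min (c ! (i - 1)) (d ! (i - 1))))
                 + max (entx c (fidx c d)) (entx d (fidx d c)))
    \<and> (fidx c d > 1 \<and> fidx d c > 1 \<longrightarrow>
       ((\<exists>e. is_partition e \<and> length e = m - 1 \<and> sum_list e = E \<and> gmaj c e \<and> gmaj d e)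
         \<longleftrightarrow> ereal (of_int E) \<ge> ereal (of_int (\<Sum>i=1..m. max (c ! (i - 1)) (d ! (i - 1))))
                 - max (entx c (fidx c d)) (entx d (fidx d c))))
    \<and> (fidx c d = 1 \<or> fidx d c = 1 \<longrightarrow>
       ((\<exists>e. is_partition e \<and> length e = m - 1 \<and> sum_list e = E \<and> gmaj c e \<and> gmaj d e)
         \<longleftrightarrow> (ereal (of_int E) = ereal (of_int (\<Sum>i=1..m. max (c ! (i - 1)) (d ! (i - 1))))
                 - max (entx c (fidx c d)) (entx d (fidx d c))
              \<or> ereal (of_int E) \<ge> ereal (of_int (\<Sum>i=1..m. max (c ! (i - 1)) (d ! (i - 1))))
                 - max (entx c (fidx c d + 1)) (entx d (fidx d c + 1))))
       \<and> (m \<ge> 2 \<longrightarrow>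
         ((\<exists>e. is_partition e \<and> length e = m - 1 \<and> sum_list e = E \<and> gmaj c e \<and> gmaj d e)
           \<longleftrightarrow> (E = (\<Sum>i=2..m. max (c ! (i - 1)) (d ! (i - 1)))
                \<or> E \<ge> max (c ! 0) (d ! 0) + (\<Sum>i=3..m. max (c ! (i - 1)) (d ! (i - 1)))))))"
proof -
  interpret distinct_partitions c d m
    using assms(3-7) by unfold_locales
  show ?thesis
    using ex_common_pred_iff[OF assms(1)] ex_common_succ_iff_of_fidx_gt_1
      ex_common_succ_iff_of_fidx_eq_1 ex_common_succ_iff_of_fidx_eq_1_explicit
    by blast
qed

end
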